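(* For every $n_0>3$ there exist asymptotically polytropic equations of state having $n_0$ as their low-pressure asymptotic index such that some of the corresponding regular perfect fluid solutions have infinite radius (i.e. $p(r)>0$ for all $r>0$).
   Context: Equation of state: a barotropic relation $\rho=\rho(p)$ with $\rho>0$ for $p>0$ and $\eta(p)=\int_0^p dp'/\rho(p')$ finite for $p>0$. Index function: $n(\eta)=\frac{\eta}{\rho}\frac{d\rho}{d\eta}$. Asymptotically polytropic with indices $n_0,n_1$: $n$ bounded and non-negative, $n(\eta)\to n_0$ (with error $O(\eta^{a_0})$, $a_0>0$) as $\eta\to0$ and $n(\eta)\to n_1$ (error $O(\eta^{-a_1})$) as $\eta\to\infty$; the examples in the paper are composite equations of state, with $n(\eta)=n_0$ for $\eta\le\eta_j$ and $n(\eta)=n_1$ (a constant slightly greater than 5) for $\eta>\eta_j$. Regular perfect fluid solution: solution of $dm/dr=4\pi r^2\rho(p)$, $dp/dr=-m\rho(p)/r^2$ with $m\to0$ and $p\to p_c\in(0,\infty)$ as $r\to0$. *)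

theory Defs
  imports "HOL-Analysis.Analysis" "HOL-Library.Landau_Symbols"
begin

definition eta_of :: "(real \<Rightarrow> real) \<Rightarrow> real \<Rightarrow> real" where
  "eta_of rho p = integral {0..p} (\<lambda>q. 1 / rho q)"

definition is_eos :: "(real \<Rightarrow> real) \<Rightarrow> bool" where
  "is_eos rho \<longleftrightarrow> (\<forall>p>0. rho p > 0) \<and> (\<forall>p>0. (\<lambda>q. 1 / rho q) integrable_on {0..p})"

text \<open>rho as a function of eta (eta is strictly increasing in p).\<close>
definition rho_of_eta :: "(real \<Rightarrow> real) \<Rightarrow> real \<Rightarrow> real" where
  "rho_of_eta rho e = rho (THE p. p > 0 \<and> eta_of rho p = e)"

text \<open>n is the index function n(eta) = eta / rho * d rho / d eta; the derivative is
  required to exist except at finitely many eta (composite equations of state).\<close>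
definition index_function :: "(real \<Rightarrow> real) \<Rightarrow> (real \<Rightarrow> real) \<Rightarrow> bool" where
  "index_function rho n \<longleftrightarrow>
     continuous_on {0<..} (rho_of_eta rho) \<and>
     (\<exists>S. finite S \<and> (\<forall>e>0. e \<notin> S \<longrightarrow>
        (rho_of_eta rho has_real_derivative (rho_of_eta rho e * n e / e)) (at e)))"

definition asympt_polytropic :: "(real \<Rightarrow> real) \<Rightarrow> real \<Rightarrow> real \<Rightarrow> bool" where
  "asympt_polytropic rho n0 n1 \<longleftrightarrow>
     is_eos rho \<and> filterlim (eta_of rho) at_top at_top \<and>
     (\<exists>n a0 a1. index_function rho n \<and>
        bounded (n ` {0<..}) \<and> (\<forall>e>0. n e \<ge> 0) \<and> a0 > 0 \<and> a1 > 0 \<and>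
        (\<lambda>e. n e - n0) \<in> O[at_right 0](\<lambda>e. e powr a0) \<and>
        (\<lambda>e. n e - n1) \<in> O[at_top](\<lambda>e. e powr (- a1)))"

definition regular_solution ::
  "(real \<Rightarrow> real) \<Rightarrow> (real \<Rightarrow> real) \<Rightarrow> (real \<Rightarrow> real) \<Rightarrow> ereal \<Rightarrow> bool" where
  "regular_solution rho m p R \<longleftrightarrow> 0 < R \<and>
     (\<forall>r>0. ereal r < R \<longrightarrow> p r > 0 \<and>
        (m has_real_derivative (4 * pi * r\<^sup>2 * rho (p r))) (at r) \<and>
        (p has_real_derivative (- m r * rho (p r) / r\<^sup>2)) (at r)) \<and>
     (m \<longlongrightarrow> 0) (at_right 0) \<and>
     (\<exists>pc. 0 < pc \<and> (p \<longlongrightarrow> pc) (at_right 0))"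

end

theory Submission
  imports Defs
begin

text \<open>Describe the equation of state through the variable \<open>\<eta> = \<integral>dp/\<rho>\<close>: if \<open>P(\<eta>)\<close> is the
  pressure and \<open>\<rho>(\<eta>) = P'(\<eta>) > 0\<close>, then \<open>\<eta>\<close> is the inverse of \<open>P\<close> and the structure
  equations become \<open>d\<eta>/dr = -m/r\<^sup>2\<close>, \<open>dm/dr = 4\<pi> r\<^sup>2 \<rho>(\<eta>)\<close>. For \<open>0 < a < 1/2\<close> the profile
  \<open>\<eta> = (1 + r\<^sup>2)^(-a)\<close>, \<open>m = 2a r\<^sup>3 (1 + r\<^sup>2)^(-a-1)\<close>, a deformation of Plummer's sphere
  (the case \<open>a = 1/2\<close>), solves these equations exactly for
  \<open>\<rho>(\<eta>) = \<eta>^n (c\<^sub>1 + c\<^sub>2 \<eta>^k)\<close> with \<open>n = 1 + 1/a\<close>, \<open>k = 1/a\<close>, \<open>c\<^sub>1 = a(1 - 2a)/(2\<pi>)\<close> and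
  \<open>c\<^sub>2 = a(1 + a)/\<pi>\<close>. The index function \<open>n + k c\<^sub>2 \<eta>^k / (c\<^sub>1 + c\<^sub>2 \<eta>^k)\<close> of this density
  moves from \<open>n\<close> to \<open>n + k\<close>, so the equation of state is asymptotically polytropic with
  \<open>n\<^sub>0 = 1 + 1/a\<close>, which ranges over all of \<open>(3, \<infinity>)\<close>; and \<open>\<eta>\<close>, hence \<open>p\<close>, is positive for every
  \<open>r\<close>.\<close>

locale eos_of_eta =
  fixes pressure dens :: "real \<Rightarrow> real"
  assumes continuous_pressure: "continuous_on {0..} pressure"
    and pressure_0: "pressure 0 = 0"
    and pressure_deriv: "\<And>e. e > 0 \<Longrightarrow> (pressure has_real_derivative dens e) (at e)"
    and dens_pos: "\<And>e. e > 0 \<Longrightarrow> dens e > 0"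
    and pressure_at_top: "filterlim pressure at_top at_top"
begin

definition eta :: "real \<Rightarrow> real" where
  "eta = the_inv_into {0..} pressure"

definition rho :: "real \<Rightarrow> real" where
  "rho p = dens (eta p)"

lemma pressure_strict_mono: "strict_mono_on {0..} pressure"
proof (rule strict_mono_onI)
  fix x y :: real
  assume x: "x \<in> {0..}" and xy: "x < y"
  show "pressure x < pressure y"
  proof (rule DERIV_pos_imp_increasing_open[OF xy])
    show "continuous_on {x..y} pressure"
      using x by (intro continuous_on_subset[OF continuous_pressure]) auto
    fix z assume "x < z"
    with x have "z > 0" by simp
    then show "\<exists>d. (pressure has_real_derivative d) (at z) \<and> d > 0"
      using pressure_deriv dens_pos by blast
  qed
qed

lemma pressure_le_iff: "0 \<le> x \<Longrightarrow> 0 \<le> y \<Longrightarrow> pressure x \<le> pressure y \<longleftrightarrow> x \<le> y"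
  using strict_mono_on_less_eq[OF pressure_strict_mono] by simp

lemma pressure_pos: "0 < e \<Longrightarrow> 0 < pressure e"
  using strict_mono_onD[OF pressure_strict_mono, of 0 e] pressure_0 by simp

lemma pressure_image_interval:
  assumes "0 \<le> b"
  shows "pressure ` {0..b} = {0..pressure b}"
proof
  show "pressure ` {0..b} \<subseteq> {0..pressure b}"
  proof
    fix p assume "p \<in> pressure ` {0..b}"
    then obtain x where "x \<in> {0..b}" "p = pressure x" by blast
    then show "p \<in> {0..pressure b}"
      using pressure_le_iff[of 0 x] pressure_le_iff[of x b] pressure_0 by auto
  qed
  show "{0..pressure b} \<subseteq> pressure ` {0..b}"
  proof
    fix p assume "p \<in> {0..pressure b}"
    then obtain x where "0 \<le> x" "x \<le> b" "pressure x = p"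
      using IVT'[of pressure 0 p b] assms pressure_0
        continuous_on_subset[OF continuous_pressure, of "{0..b}"] by auto
    then show "p \<in> pressure ` {0..b}" by auto
  qed
qed

lemma pressure_image: "pressure ` {0..} = {0..}"
proof
  show "pressure ` {0..} \<subseteq> {0..}"
    using pressure_le_iff[of 0] pressure_0 by auto
  show "{0..} \<subseteq> pressure ` {0..}"
  proof
    fix p :: real
    assume "p \<in> {0..}"
    obtain N where "\<And>x. x \<ge> N \<Longrightarrow> pressure x \<ge> p"
      using pressure_at_top by (auto simp: filterlim_at_top eventually_at_top_linorder)
    then have "p \<in> pressure ` {0..max 0 N}"
      using \<open>p \<in> {0..}\<close> pressure_image_interval[of "max 0 N"] by auto
    then show "p \<in> pressure ` {0..}" by auto
  qed
qed

lemma inj_on_pressure: "inj_on pressure {0..}"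
  using pressure_strict_mono by (rule strict_mono_on_imp_inj_on)

lemma eta_pressure: "0 \<le> e \<Longrightarrow> eta (pressure e) = e"
  unfolding eta_def by (rule the_inv_into_f_f[OF inj_on_pressure]) simp

lemma pressure_eta: "0 \<le> p \<Longrightarrow> pressure (eta p) = p"
  unfolding eta_def by (rule f_the_inv_into_f[OF inj_on_pressure]) (simp add: pressure_image)

lemma eta_nonneg: "0 \<le> p \<Longrightarrow> 0 \<le> eta p"
  unfolding eta_def using the_inv_into_into[OF inj_on_pressure, of p "{0..}"]
  by (simp add: pressure_image)

lemma eta_pos: "0 < p \<Longrightarrow> 0 < eta p"
  using eta_nonneg[of p] pressure_eta[of p] pressure_0 by (cases "eta p = 0") auto

lemma continuous_on_eta:
  assumes "0 \<le> p"
  shows "continuous_on {0..p} eta"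
proof -
  have "continuous_on (pressure ` {0..eta p}) eta"
    by (rule continuous_on_inv) (auto intro: continuous_on_subset[OF continuous_pressure] eta_pressure)
  then show ?thesis
    using pressure_image_interval[OF eta_nonneg[OF assms]] pressure_eta[OF assms] by simp
qed

lemma eta_deriv:
  assumes "0 < p"
  shows "(eta has_real_derivative inverse (rho p)) (at p)"
proof -
  have "(eta has_derivative (*) (inverse (dens (eta p)))) (at (pressure (eta p)))"
  proof (rule has_derivative_inverse_strong
      [where S = "{0<..}" and f = pressure and x = "eta p" and f' = "(*) (dens (eta p))"])
    show "(pressure has_derivative (*) (dens (eta p))) (at (eta p))"
      using pressure_deriv[OF eta_pos[OF assms]] by (simp add: has_field_derivative_def)
    show "(*) (dens (eta p)) \<circ> (*) (inverse (dens (eta p))) = id"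
      using dens_pos[OF eta_pos[OF assms]] by (auto simp: fun_eq_iff)
  qed (use eta_pressure eta_pos assms in \<open>auto intro: continuous_on_subset[OF continuous_pressure]\<close>)
  then show ?thesis
    using pressure_eta assms by (simp add: has_field_derivative_def rho_def)
qed

lemma inverse_rho_has_integral: "0 \<le> p \<Longrightarrow> ((\<lambda>q. 1 / rho q) has_integral eta p) {0..p}"
  using fundamental_theorem_of_calculus_interior[of 0 p eta "\<lambda>q. 1 / rho q"]
    continuous_on_eta eta_deriv eta_pressure[of 0] pressure_0
  by (simp add: has_real_derivative_iff_has_vector_derivative[symmetric] divide_inverse)

lemma eta_of_rho: "0 \<le> p \<Longrightarrow> eta_of rho p = eta p"
  unfolding eta_of_def using inverse_rho_has_integral by (rule integral_unique)

lemma is_eos_rho: "is_eos rho"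
  unfolding is_eos_def
proof (intro conjI allI impI)
  fix p :: real
  assume "p > 0"
  then show "rho p > 0"
    using dens_pos eta_pos by (simp add: rho_def)
  show "(\<lambda>q. 1 / rho q) integrable_on {0..p}"
    using inverse_rho_has_integral \<open>p > 0\<close> by (meson has_integral_integrable less_imp_le)
qed

lemma eta_of_rho_at_top: "filterlim (eta_of rho) at_top at_top"
  unfolding filterlim_at_top eventually_at_top_linorder
proof
  fix Z :: real
  show "\<exists>N. \<forall>p\<ge>N. Z \<le> eta_of rho p"
  proof (intro exI allI impI)
    fix p
    assume p: "pressure (max Z 1) \<le> p"
    then have "0 \<le> p"
      using pressure_pos[of "max Z 1"] by linarith
    then have "max Z 1 \<le> eta p"
      using p pressure_le_iff[of "max Z 1" "eta p"] pressure_eta eta_nonneg by simp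
    then show "Z \<le> eta_of rho p"
      using eta_of_rho \<open>0 \<le> p\<close> by simp
  qed
qed

lemma rho_of_eta_rho:
  assumes "0 < e"
  shows "rho_of_eta rho e = dens e"
proof -
  have "(THE p. p > 0 \<and> eta_of rho p = e) = pressure e"
  proof (rule the_equality)
    show "pressure e > 0 \<and> eta_of rho (pressure e) = e"
      using assms pressure_pos[OF assms] eta_of_rho eta_pressure by simp
    fix p assume "p > 0 \<and> eta_of rho p = e"
    then show "p = pressure e"
      using eta_of_rho[of p] pressure_eta[of p] by auto
  qed
  then show ?thesis
    unfolding rho_of_eta_def rho_def using assms eta_pressure by simp
qed

lemma index_function_rho:
  assumes dens_deriv: "\<And>e. e > 0 \<Longrightarrow> (dens has_real_derivative dens e * n e / e) (at e)"
  shows "index_function rho n"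
  unfolding index_function_def
proof (intro conjI exI[of _ "{}"] allI impI)
  have "continuous_on {0<..} (rho_of_eta rho) = continuous_on {0<..} dens"
    by (rule continuous_on_cong) (simp_all add: rho_of_eta_rho)
  moreover have "continuous_on {0<..} dens"
    using dens_deriv by (intro continuous_at_imp_continuous_on) (auto intro: DERIV_isCont)
  ultimately show "continuous_on {0<..} (rho_of_eta rho)" by simp
  fix e :: real
  assume "e > 0"
  then have "(rho_of_eta rho has_real_derivative dens e * n e / e) (at e)"
    by (intro has_field_derivative_transform_within_open[OF dens_deriv, of e "{0<..}"])
      (simp_all add: rho_of_eta_rho)
  then show "(rho_of_eta rho has_real_derivative rho_of_eta rho e * n e / e) (at e)"
    using \<open>e > 0\<close> by (simp add: rho_of_eta_rho)
qed simp

lemma regular_solution_rho: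
  fixes m y :: "real \<Rightarrow> real" and yc :: real
  assumes y_pos: "\<And>r. r > 0 \<Longrightarrow> y r > 0"
    and y_deriv: "\<And>r. r > 0 \<Longrightarrow> (y has_real_derivative - m r / r\<^sup>2) (at r)"
    and m_deriv: "\<And>r. r > 0 \<Longrightarrow> (m has_real_derivative 4 * pi * r\<^sup>2 * dens (y r)) (at r)"
    and m_lim: "(m \<longlongrightarrow> 0) (at_right 0)"
    and yc_pos: "yc > 0" and y_lim: "(y \<longlongrightarrow> yc) (at_right 0)"
  shows "regular_solution rho m (\<lambda>r. pressure (y r)) \<infinity>"
  unfolding regular_solution_def
proof (intro conjI allI impI)
  fix r :: real
  assume r: "r > 0"
  have rho_y: "rho (pressure (y r)) = dens (y r)"
    using y_pos[OF r] eta_pressure by (simp add: rho_def)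
  show "pressure (y r) > 0"
    using pressure_pos y_pos r by simp
  show "(m has_real_derivative 4 * pi * r\<^sup>2 * rho (pressure (y r))) (at r)"
    using m_deriv[OF r] rho_y by simp
  show "((\<lambda>r. pressure (y r)) has_real_derivative - m r * rho (pressure (y r)) / r\<^sup>2) (at r)"
    using DERIV_chain2[OF pressure_deriv[OF y_pos[OF r]] y_deriv[OF r]] rho_y
    by (simp add: mult.commute)
next
  have "isCont pressure yc"
    using pressure_deriv[OF yc_pos] by (rule DERIV_isCont)
  then have "((\<lambda>r. pressure (y r)) \<longlongrightarrow> pressure yc) (at_right 0)"
    using y_lim by (rule isCont_tendsto_compose)
  then show "\<exists>pc>0. ((\<lambda>r. pressure (y r)) \<longlongrightarrow> pc) (at_right 0)"
    using pressure_pos[OF yc_pos] by blast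
qed (use m_lim in simp_all)

end

lemma regular_solution_infinite_pressure_pos:
  "regular_solution rho m p \<infinity> \<Longrightarrow> r > 0 \<Longrightarrow> p r > 0"
  by (simp add: regular_solution_def)

locale two_power_eos =
  fixes n k c1 c2 :: real
  assumes n_nonneg: "0 \<le> n" and k_pos: "0 < k" and c1_pos: "0 < c1" and c2_pos: "0 < c2"
begin

definition density :: "real \<Rightarrow> real" where
  "density e = e powr n * (c1 + c2 * e powr k)"

definition pressure :: "real \<Rightarrow> real" where
  "pressure e = c1 / (n + 1) * e powr (n + 1) + c2 / (n + k + 1) * e powr (n + k + 1)"

definition index :: "real \<Rightarrow> real" where
  "index e = n + k * c2 * e powr k / (c1 + c2 * e powr k)"

lemma density_denominator_pos: "0 < c1 + c2 * e powr k"
  using c1_pos c2_pos by (simp add: add_pos_nonneg)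

lemma pressure_ge_linear:
  assumes "1 \<le> e"
  shows "c1 / (n + 1) * e \<le> pressure e"
proof -
  have "e \<le> e powr (n + 1)"
    using powr_mono[of 1 "n + 1" e] assms n_nonneg by simp
  then have "c1 / (n + 1) * e \<le> c1 / (n + 1) * e powr (n + 1)"
    using c1_pos n_nonneg by (intro mult_left_mono) auto
  moreover have "0 \<le> c2 / (n + k + 1) * e powr (n + k + 1)"
    using c2_pos n_nonneg k_pos by simp
  ultimately show ?thesis
    unfolding pressure_def by linarith
qed

sublocale eos_of_eta pressure density
proof
  show "continuous_on {0..} pressure"
    unfolding pressure_def using n_nonneg k_pos
    by (intro continuous_intros continuous_on_powr') auto
  show "pressure 0 = 0"
    using n_nonneg k_pos by (simp add: pressure_def)
  fix e :: real
  assume "e > 0"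
  have "(pressure has_real_derivative
      c1 / (n + 1) * ((n + 1) * e powr (n + 1 - 1))
      + c2 / (n + k + 1) * ((n + k + 1) * e powr (n + k + 1 - 1))) (at e)"
    unfolding pressure_def using \<open>e > 0\<close> by (auto intro!: derivative_eq_intros)
  moreover have "c1 / (n + 1) * ((n + 1) * x) = c1 * x"
    and "c2 / (n + k + 1) * ((n + k + 1) * x) = c2 * x" for x
    using n_nonneg k_pos by simp_all
  ultimately have "(pressure has_real_derivative
      c1 * e powr (n + 1 - 1) + c2 * e powr (n + k + 1 - 1)) (at e)"
    by (simp only:)
  then show "(pressure has_real_derivative density e) (at e)"
    by (simp add: density_def powr_add algebra_simps)
  show "density e > 0"
    using \<open>e > 0\<close> density_denominator_pos by (simp add: density_def)
next
  have "filterlim (\<lambda>e. c1 / (n + 1) * e) at_top at_top"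
    using c1_pos n_nonneg
    by (intro filterlim_tendsto_pos_mult_at_top[OF tendsto_const _ filterlim_ident]) simp
  then show "filterlim pressure at_top at_top"
    by (rule filterlim_at_top_mono) (use pressure_ge_linear in \<open>auto simp: eventually_at_top_linorder\<close>)
qed

lemma density_deriv:
  assumes "0 < e"
  shows "(density has_real_derivative density e * index e / e) (at e)"
proof -
  have "(density has_real_derivative
      n * e powr (n - 1) * (c1 + c2 * e powr k) + e powr n * (c2 * (k * e powr (k - 1)))) (at e)"
    unfolding density_def using assms by (auto intro!: derivative_eq_intros)
  moreover have "n * e powr (n - 1) * (c1 + c2 * e powr k) + e powr n * (c2 * (k * e powr (k - 1)))
      = density e * index e / e"
  proof -
    define D where "D = c1 + c2 * e powr k"
    have "D \<noteq> 0"
      using density_denominator_pos[of e] by (simp add: D_def)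
    then show ?thesis
      using assms unfolding density_def index_def D_def[symmetric]
      by (simp add: powr_diff field_simps)
  qed
  ultimately show ?thesis by simp
qed

lemma index_bounds: "n \<le> index e \<and> index e \<le> n + k"
proof -
  define q where "q = c2 * e powr k / (c1 + c2 * e powr k)"
  have "0 \<le> q" "q \<le> 1"
    using c1_pos c2_pos density_denominator_pos[of e] by (simp_all add: q_def)
  moreover have "index e = n + k * q"
    by (simp add: index_def q_def)
  ultimately show ?thesis
    using k_pos mult_left_le[of q k] by simp
qed

lemma index_bigo_at_right_0: "(\<lambda>e. index e - n) \<in> O[at_right 0](\<lambda>e. e powr k)"
proof (rule bigoI[where c = "k * c2 / c1"])
  show "\<forall>\<^sub>F e in at_right 0. norm (index e - n) \<le> k * c2 / c1 * norm (e powr k)"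
  proof (rule always_eventually, rule allI)
    fix e :: real
    have "norm (index e - n) = index e - n"
      using index_bounds[of e] by simp
    also have "\<dots> = k * c2 * e powr k / (c1 + c2 * e powr k)"
      by (simp add: index_def)
    also have "\<dots> \<le> k * c2 * e powr k / c1"
      using c1_pos c2_pos k_pos density_denominator_pos[of e] by (intro divide_left_mono) auto
    finally show "norm (index e - n) \<le> k * c2 / c1 * norm (e powr k)"
      by simp
  qed
qed

lemma index_bigo_at_top: "(\<lambda>e. index e - (n + k)) \<in> O[at_top](\<lambda>e. e powr (- k))"
proof (rule bigoI[where c = "k * c1 / c2"])
  show "\<forall>\<^sub>F e in at_top. norm (index e - (n + k)) \<le> k * c1 / c2 * norm (e powr (- k))"
  proof (rule eventually_mono[OF eventually_gt_at_top[of 0]])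
    fix e :: real
    assume "0 < e"
    have "index e - (n + k) = - (k * c1 / (c1 + c2 * e powr k))"
      using density_denominator_pos[of e] by (simp add: index_def field_simps)
    moreover have "k * c1 / (c1 + c2 * e powr k) \<le> k * c1 / (c2 * e powr k)"
      using \<open>0 < e\<close> c1_pos c2_pos k_pos density_denominator_pos[of e]
      by (intro divide_left_mono) auto
    moreover have "k * c1 / (c2 * e powr k) = k * c1 / c2 * e powr (- k)"
      by (simp add: powr_minus field_simps)
    ultimately show "norm (index e - (n + k)) \<le> k * c1 / c2 * norm (e powr (- k))"
      using c1_pos c2_pos k_pos density_denominator_pos[of e] by simp
  qed
qed

lemma asympt_polytropic_rho: "asympt_polytropic rho n (n + k)"
proof -
  have "index_function rho index"
    using density_deriv by (rule index_function_rho)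
  moreover have "bounded (index ` {0<..})"
  proof -
    have "\<bar>index e\<bar> \<le> n + k" for e
      using index_bounds[of e] n_nonneg by simp
    then show ?thesis
      unfolding bounded_real by blast
  qed
  moreover have "\<forall>e>0. index e \<ge> 0"
    using index_bounds n_nonneg order_trans by blast
  ultimately show ?thesis
    unfolding asympt_polytropic_def
    using is_eos_rho eta_of_rho_at_top k_pos index_bigo_at_right_0 index_bigo_at_top by blast
qed

end

lemma one_plus_square_pos: "0 < 1 + r\<^sup>2" for r :: real
  by (simp add: add_pos_nonneg)

lemma one_plus_square_powr_deriv:
  "((\<lambda>r. (1 + r\<^sup>2) powr b) has_real_derivative b * (1 + r\<^sup>2) powr (b - 1) * (2 * r)) (at r)"
  for b r :: real
proof -
  have "((\<lambda>z. z powr b) has_real_derivative b * (1 + r\<^sup>2) powr (b - 1)) (at (1 + r\<^sup>2))"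
    by (rule has_real_derivative_powr[OF one_plus_square_pos])
  moreover have "((\<lambda>r. 1 + r\<^sup>2) has_real_derivative 2 * r) (at r)"
    by (auto intro!: derivative_eq_intros)
  ultimately show ?thesis
    by (rule DERIV_chain2[where g = "\<lambda>r. 1 + r\<^sup>2"])
qed

locale plummer_family =
  fixes a :: real
  assumes a_pos: "0 < a" and a_less_half: "a < 1 / 2"
begin

sublocale two_power_eos "1 + 1 / a" "1 / a" "a * (1 - 2 * a) / (2 * pi)" "a * (1 + a) / pi"
  using a_pos a_less_half by unfold_locales auto

definition eta_profile :: "real \<Rightarrow> real" where
  "eta_profile r = (1 + r\<^sup>2) powr (- a)"

definition mass_profile :: "real \<Rightarrow> real" where
  "mass_profile r = 2 * a * r ^ 3 * (1 + r\<^sup>2) powr (- a - 1)"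

lemma one_plus_square_powr_split:
  "(1 + r\<^sup>2) powr (- a - 1) = (1 + r\<^sup>2) * (1 + r\<^sup>2) powr (- a - 2)"
proof -
  have "(1 + r\<^sup>2) * (1 + r\<^sup>2) powr (- a - 2) = (1 + r\<^sup>2) powr (1 + (- a - 2))"
    by (rule powr_mult_base) simp
  moreover have "1 + (- a - 2) = - a - 1"
    by simp
  ultimately show ?thesis
    by simp
qed

lemma eta_profile_deriv:
  assumes "r \<noteq> 0"
  shows "(eta_profile has_real_derivative - mass_profile r / r\<^sup>2) (at r)"
proof -
  have "(eta_profile has_real_derivative - a * (1 + r\<^sup>2) powr (- a - 1) * (2 * r)) (at r)"
    unfolding eta_profile_def using one_plus_square_powr_deriv[of "- a" r] by simp
  then show ?thesis
    using assms by (simp add: mass_profile_def power2_eq_square power3_eq_cube field_simps)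
qed

lemma density_eta_profile:
  "density (eta_profile r) =
     (1 + r\<^sup>2) powr (- a - 2) * (a * (1 - 2 * a) / (2 * pi) * (1 + r\<^sup>2) + a * (1 + a) / pi)"
proof -
  define W where "W = 1 + r\<^sup>2"
  have "W > 0"
    using one_plus_square_pos[of r] by (simp add: W_def)
  have "- a * (1 + 1 / a) = - a - 1"
    using a_pos by (simp add: field_simps)
  then have "eta_profile r powr (1 + 1 / a) = W powr (- a - 1)"
    unfolding eta_profile_def W_def powr_powr by (rule arg_cong)
  also have "\<dots> = W * W powr (- a - 2)"
    unfolding W_def by (rule one_plus_square_powr_split)
  finally have n_part: "eta_profile r powr (1 + 1 / a) = W * W powr (- a - 2)" .
  have "eta_profile r powr (1 / a) = W powr (- 1)"
    using a_pos by (simp add: eta_profile_def W_def powr_powr)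
  also have "\<dots> = inverse W"
    using \<open>W > 0\<close> by (simp add: powr_minus)
  finally have k_part: "eta_profile r powr (1 / a) = inverse W" .
  show ?thesis
    unfolding density_def n_part k_part W_def[symmetric] using \<open>W > 0\<close> by (simp add: field_simps)
qed

lemma mass_profile_deriv:
  "(mass_profile has_real_derivative 4 * pi * r\<^sup>2 * density (eta_profile r)) (at r)"
proof -
  define V where "V = (1 + r\<^sup>2) powr (- a - 2)"
  have "((\<lambda>r. (1 + r\<^sup>2) powr (- a - 1)) has_real_derivative
      (- a - 1) * (1 + r\<^sup>2) powr (- a - 1 - 1) * (2 * r)) (at r)"
    by (rule one_plus_square_powr_deriv)
  moreover have "- a - 1 - 1 = - a - 2"
    by simp
  ultimately have "((\<lambda>r. (1 + r\<^sup>2) powr (- a - 1)) has_real_derivative (- a - 1) * V * (2 * r)) (at r)"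
    by (simp only: V_def)
  moreover have "((\<lambda>r. 2 * a * r ^ 3) has_real_derivative 2 * a * (3 * r\<^sup>2)) (at r)"
    by (auto intro!: derivative_eq_intros)
  ultimately have "(mass_profile has_real_derivative
      2 * a * (3 * r\<^sup>2) * (1 + r\<^sup>2) powr (- a - 1) + (- a - 1) * V * (2 * r) * (2 * a * r ^ 3)) (at r)"
    unfolding mass_profile_def by (rule DERIV_mult[rotated])
  moreover have "2 * a * (3 * r\<^sup>2) * (1 + r\<^sup>2) powr (- a - 1) + (- a - 1) * V * (2 * r) * (2 * a * r ^ 3)
      = 4 * pi * r\<^sup>2 * density (eta_profile r)"
    unfolding density_eta_profile one_plus_square_powr_split V_def[symmetric]
    by (simp add: field_simps power2_eq_square power3_eq_cube)
  ultimately show ?thesis by simp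
qed

lemma regular_solution_profile:
  "regular_solution rho mass_profile (\<lambda>r. pressure (eta_profile r)) \<infinity>"
proof (rule regular_solution_rho)
  have "isCont mass_profile 0"
    using mass_profile_deriv by (rule DERIV_isCont)
  then have "(mass_profile \<longlongrightarrow> 0) (at 0)"
    by (simp add: isCont_def mass_profile_def)
  then show "(mass_profile \<longlongrightarrow> 0) (at_right 0)"
    by (rule tendsto_within_subset) simp
  have "isCont eta_profile 0"
    unfolding eta_profile_def by (intro continuous_intros) auto
  then have "(eta_profile \<longlongrightarrow> 1) (at 0)"
    by (simp add: isCont_def eta_profile_def)
  then show "(eta_profile \<longlongrightarrow> 1) (at_right 0)"
    by (rule tendsto_within_subset) simp
next
  fix r :: real
  assume "r > 0"
  then show "eta_profile r > 0"
    using one_plus_square_pos[of r] by (simp add: eta_profile_def)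
  show "(eta_profile has_real_derivative - mass_profile r / r\<^sup>2) (at r)"
    using \<open>r > 0\<close> by (intro eta_profile_deriv) simp
qed (simp_all add: mass_profile_deriv)

end

theorem theorem4:
  fixes n0 :: real
  assumes "n0 > 3"
  shows "\<exists>rho n1. asympt_polytropic rho n0 n1 \<and>
           (\<exists>m p. regular_solution rho m p \<infinity> \<and> (\<forall>r>0. p r > 0))"
proof -
  interpret plummer_family "1 / (n0 - 1)"
    using assms by unfold_locales (auto simp: field_simps)
  have "asympt_polytropic rho n0 (n0 + (n0 - 1))"
    using asympt_polytropic_rho by simp
  then show ?thesis
    using regular_solution_profile regular_solution_infinite_pressure_pos by blast
qed

end
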